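(* Let $p\geq 3$ and let $\varphi$ be a nonzero short homomorphism of $\mathcal{T}_p$ with associated functionals $\lambda$ (on $\langle w_1,\dots,w_p\rangle$) and $\mu$ (on $\langle\mathfrak{z}_0,\dots,\mathfrak{z}_p\rangle$). Then there exist $k\in\{0,1,\dots,p\}$ and $\alpha\in\mathbb{F}$, $\alpha\neq0$, such that $\lambda=\alpha\lambda_k$ and $\mu=\alpha^2\mu_k$, where: $\lambda_0(w_i)=1$ for $1\le i\le p$, $\mu_0(\mathfrak{z}_0)=1$, $\mu_0(\mathfrak{z}_i)=0$ for $1\le i\le p$; and for $1\le k\le p$, $\lambda_k(w_j)=\delta_{kj}$, $\mu_k(\mathfrak{z}_0)=0$, $\mu_k(\mathfrak{z}_j)=\delta_{kj}$ for $1\le j\le p$. Conversely each pair $(\lambda_k,\mu_k)$ defines a short homomorphism.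
   Context: $\mathbb{F}$ is a field of characteristic not $2$. $\mathcal{T}_p$ is the normal algebra over $\mathbb{F}$ with $U$-space having basis $w_1,\dots,w_p$ and $\mathfrak{Z}$-space having basis $\mathfrak{z}_0,\mathfrak{z}_1,\dots,\mathfrak{z}_p$, commutative bilinear product given by $w_iw_j=\mathfrak{z}_0+\delta_{ij}\mathfrak{z}_i$ ($1\le i,j\le p$, $\delta$ the Kronecker delta), and all other basis products $0$. The spline algebra $\mathcal{S}$ has basis $r$ (its $U$-space) and $\mathfrak{s}$ (its $\mathfrak{Z}$-space) with $r^2=\mathfrak{s}$ and all other products $0$. A short homomorphism of a normal algebra $U\oplus\mathfrak{Z}$ is a product-preserving linear map to $\mathcal{S}$ sending $U$ into $\langle r\rangle$ and $\mathfrak{Z}$ into $\langle\mathfrak{s}\rangle$; it has the form $u+\mathfrak{z}\mapsto\lambda(u)r+\mu(\mathfrak{z})\mathfrak{s}$ for linear functionals $\lambda,\mu$ with $\mu(uv)=\lambda(u)\lambda(v)$ for all $u,v\in U$. *)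

theory Defs
  imports Main
begin

text \<open>The normal algebra T_p: an element of the U-space is given by its coordinate
  vector u (u i = coefficient of w_i, 1 \<le> i \<le> p); an element of the Z-space by its
  coordinate vector z (z k = coefficient of z_k, 0 \<le> k \<le> p).  Coordinates outside
  these ranges are ignored.\<close>

text \<open>Z-coordinates of the product u v in T_p, from w_i w_j = z_0 + delta_ij z_i.\<close>
definition Tp_prod :: "nat \<Rightarrow> (nat \<Rightarrow> 'a::field) \<Rightarrow> (nat \<Rightarrow> 'a) \<Rightarrow> (nat \<Rightarrow> 'a)" where
  "Tp_prod p u v = (\<lambda>k. if k = 0 then (\<Sum>i=1..p. u i) * (\<Sum>j=1..p. v j)
                        else if k \<le> p then u k * v k else 0)"

definition lam_val :: "nat \<Rightarrow> (nat \<Rightarrow> 'a::field) \<Rightarrow> (nat \<Rightarrow> 'a) \<Rightarrow> 'a" where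
  "lam_val p l u = (\<Sum>i=1..p. l i * u i)"

definition mu_val :: "nat \<Rightarrow> (nat \<Rightarrow> 'a::field) \<Rightarrow> (nat \<Rightarrow> 'a) \<Rightarrow> 'a" where
  "mu_val p m z = (\<Sum>k=0..p. m k * z k)"

definition short_hom :: "nat \<Rightarrow> (nat \<Rightarrow> 'a::field) \<Rightarrow> (nat \<Rightarrow> 'a) \<Rightarrow> bool" where
  "short_hom p l m \<longleftrightarrow>
     (\<forall>u v. mu_val p m (Tp_prod p u v) = lam_val p l u * lam_val p l v)"

definition lamk :: "nat \<Rightarrow> nat \<Rightarrow> 'a::field" where
  "lamk k = (\<lambda>j. if k = 0 then 1 else if j = k then 1 else 0)"

definition muk :: "nat \<Rightarrow> nat \<Rightarrow> 'a::field" where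
  "muk k = (\<lambda>j. if k = 0 then (if j = 0 then 1 else 0)
               else (if j = k then 1 else 0))"

end

theory Submission
  imports Defs
begin

text \<open>Since the product of T_p is bilinear and lambda(u) lambda(v) is bilinear in (u, v),
  a pair (lambda, mu) is a short homomorphism as soon as mu(w_i w_j) = lambda(w_i) lambda(w_j)
  holds on basis vectors, i.e. mu(z_0) + delta_ij mu(z_i) = lambda_i lambda_j.  For i \<noteq> j this
  says that all products lambda_i lambda_j coincide with mu(z_0); with at least three indices
  this forces either all lambda_i to be equal and nonzero (k = 0) or all but one of them to
  vanish (k \<ge> 1), and the diagonal equations then determine mu.\<close>

definition short_hom_on_basis :: "nat \<Rightarrow> (nat \<Rightarrow> 'a::field) \<Rightarrow> (nat \<Rightarrow> 'a) \<Rightarrow> bool" where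
  "short_hom_on_basis p l m \<longleftrightarrow>
     (\<forall>i\<in>{1..p}. \<forall>j\<in>{1..p}. m 0 + (if i = j then m i else 0) = l i * l j)"

lemma mu_val_Tp_prod:
  "mu_val p m (Tp_prod p u v) =
     m 0 * ((\<Sum>i=1..p. u i) * (\<Sum>j=1..p. v j)) + (\<Sum>k=1..p. m k * (u k * v k))"
  unfolding mu_val_def by (simp add: sum.atLeast_Suc_atMost Tp_prod_def)

lemma lam_val_unit:
  assumes "i \<in> {1..p}"
  shows "lam_val p l (\<lambda>k. if k = i then 1 else 0) = l i"
  using assms by (simp add: lam_val_def if_distrib sum.delta cong: if_cong)

lemma short_hom_iff_on_basis: "short_hom p l m \<longleftrightarrow> short_hom_on_basis p l m"
proof
  assume hom: "short_hom p l m"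
  show "short_hom_on_basis p l m"
    unfolding short_hom_on_basis_def
  proof (intro ballI)
    fix i j assume i: "i \<in> {1..p}" and j: "j \<in> {1..p}"
    define e where "e = (\<lambda>i (k::nat). if k = i then (1::'a) else 0)"
    have "(\<Sum>k=1..p. m k * (e i k * e j k)) =
          (\<Sum>k=1..p. if k = i then (if i = j then m i else 0) else 0)"
      by (rule sum.cong) (auto simp: e_def)
    then have "mu_val p m (Tp_prod p (e i) (e j)) = m 0 + (if i = j then m i else 0)"
      using i j by (simp add: mu_val_Tp_prod e_def)
    moreover have "mu_val p m (Tp_prod p (e i) (e j)) = l i * l j"
      using hom i j by (simp add: short_hom_def e_def lam_val_unit)
    ultimately show "m 0 + (if i = j then m i else 0) = l i * l j" by simp
  qed
next
  assume basis: "short_hom_on_basis p l m"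
  show "short_hom p l m"
    unfolding short_hom_def
  proof (intro allI)
    fix u v :: "nat \<Rightarrow> 'a"
    have "lam_val p l u * lam_val p l v = (\<Sum>i=1..p. \<Sum>j=1..p. (l i * l j) * (u i * v j))"
      unfolding lam_val_def sum_product by (simp add: ac_simps)
    also have "\<dots> = (\<Sum>i=1..p. \<Sum>j=1..p. (m 0 + (if i = j then m i else 0)) * (u i * v j))"
      using basis by (simp add: short_hom_on_basis_def)
    also have "\<dots> = (\<Sum>i=1..p. \<Sum>j=1..p. m 0 * (u i * v j))
                      + (\<Sum>i=1..p. \<Sum>j=1..p. if i = j then m i * (u i * v j) else 0)"
      unfolding sum.distrib[symmetric] by (intro sum.cong refl) (simp add: distrib_right)
    also have "\<dots> = m 0 * ((\<Sum>i=1..p. u i) * (\<Sum>j=1..p. v j)) + (\<Sum>k=1..p. m k * (u k * v k))"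
      by (simp add: sum_product sum.delta flip: sum_distrib_left)
    finally show "mu_val p m (Tp_prod p u v) = lam_val p l u * lam_val p l v"
      by (simp add: mu_val_Tp_prod)
  qed
qed

lemma short_hom_on_basis_lamk_muk: "short_hom_on_basis p (lamk k) (muk k)"
  by (auto simp: short_hom_on_basis_def lamk_def muk_def)

lemma short_hom_on_basis_off_diag:
  assumes "short_hom_on_basis p l m" "i \<in> {1..p}" "j \<in> {1..p}" "i \<noteq> j"
  shows "l i * l j = m 0"
proof -
  have "m 0 + (if i = j then m i else 0) = l i * l j"
    using assms(1-3) unfolding short_hom_on_basis_def by blast
  with assms(4) show ?thesis by simp
qed

lemma short_hom_on_basis_diag:
  assumes "short_hom_on_basis p l m" "i \<in> {1..p}"
  shows "l i * l i = m 0 + m i"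
proof -
  have "m 0 + (if i = i then m i else 0) = l i * l i"
    using assms unfolding short_hom_on_basis_def by blast
  then show ?thesis by simp
qed

lemma short_hom_on_basis_zero:
  assumes "2 \<le> p" "short_hom_on_basis p l m" "\<forall>i\<in>{1..p}. l i = 0"
  shows "\<forall>i\<in>{0..p}. m i = 0"
proof -
  have m0: "m 0 = 0"
    using short_hom_on_basis_off_diag[OF assms(2), of 1 2] assms by simp
  have mi: "m i = 0" if "i \<in> {1..p}" for i
    using short_hom_on_basis_diag[OF assms(2) that] assms(3) that m0 by simp
  show ?thesis
  proof
    fix i assume "i \<in> {0..p}"
    then show "m i = 0" using m0 mi[of i] by (cases "i = 0") auto
  qed
qed

lemma short_hom_on_basis_const:
  assumes "3 \<le> p" "short_hom_on_basis p l m" "m 0 \<noteq> 0" "i \<in> {1..p}"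
  shows "l i = l 1"
proof -
  define t where "t = (if i = 2 then 3 else 2::nat)"
  have t: "t \<in> {1..p}" "t \<noteq> 1" "t \<noteq> i" using assms(1,4) by (auto simp: t_def)
  have "l t * l 1 = m 0" "l t * l i = m 0"
    using short_hom_on_basis_off_diag[OF assms(2) t(1)] t assms(1,4) by auto
  with \<open>m 0 \<noteq> 0\<close> show ?thesis by (metis mult_cancel_left mult_zero_left)
qed

lemma short_hom_on_basis_classification:
  assumes "3 \<le> p" "short_hom_on_basis p l m" "\<exists>i\<in>{1..p}. l i \<noteq> 0"
  shows "\<exists>k\<in>{0..p}. \<exists>\<alpha>. \<alpha> \<noteq> 0 \<and> (\<forall>i\<in>{1..p}. l i = \<alpha> * lamk k i)
                         \<and> (\<forall>i\<in>{0..p}. m i = \<alpha>^2 * muk k i)"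
proof (cases "m 0 = 0")
  case False
  have l_const: "\<And>i. i \<in> {1..p} \<Longrightarrow> l i = l 1"
    using short_hom_on_basis_const[OF assms(1,2) False] .
  have m0: "m 0 = l 1 * l 1"
    using short_hom_on_basis_off_diag[OF assms(2), of 1 2] l_const[of 2] assms(1) by simp
  have mi: "m i = 0" if "i \<in> {1..p}" for i
    using short_hom_on_basis_diag[OF assms(2) that] l_const[OF that] m0 by simp
  show ?thesis
  proof (intro bexI[of _ 0] exI[of _ "l 1"] conjI ballI)
    show "l 1 \<noteq> 0" using False m0 by auto
    show "l i = l 1 * lamk 0 i" if "i \<in> {1..p}" for i
      using l_const[OF that] by (simp add: lamk_def)
    show "m i = (l 1)^2 * muk 0 i" if "i \<in> {0..p}" for i
      using m0 mi[of i] that by (cases "i = 0") (auto simp: muk_def power2_eq_square)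
  qed simp
next
  case True
  from assms(3) obtain k where k: "k \<in> {1..p}" "l k \<noteq> 0" by blast
  have others: "l i = 0" if "i \<in> {1..p}" "i \<noteq> k" for i
    using short_hom_on_basis_off_diag[OF assms(2) k(1) that(1)] that(2) True k(2) by auto
  have mi: "m i = l i * l i" if "i \<in> {1..p}" for i
    using short_hom_on_basis_diag[OF assms(2) that] True by simp
  show ?thesis
  proof (intro bexI[of _ k] exI[of _ "l k"] conjI ballI)
    show "l i = l k * lamk k i" if "i \<in> {1..p}" for i
      using others[OF that] k by (simp add: lamk_def)
    show "m i = (l k)^2 * muk k i" if "i \<in> {0..p}" for i
      using True mi[of i] others[of i] that k
      by (cases "i = 0") (auto simp: muk_def power2_eq_square)
  qed (use k in auto)
qed

lemma lam_val_scale: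
  assumes "\<forall>i\<in>{1..p}. l i = \<alpha> * l' i"
  shows "lam_val p l u = \<alpha> * lam_val p l' u"
  using assms by (simp add: lam_val_def sum_distrib_left mult.assoc)

lemma mu_val_scale:
  assumes "\<forall>i\<in>{0..p}. m i = \<alpha> * m' i"
  shows "mu_val p m z = \<alpha> * mu_val p m' z"
  using assms by (simp add: mu_val_def sum_distrib_left mult.assoc)

theorem lemma7p1:
  fixes p :: nat and l m :: "nat \<Rightarrow> 'a::field"
  assumes char: "(2::'a) \<noteq> 0"
    and p3: "p \<ge> 3"
  shows "(short_hom p l m \<and> (\<exists>u z. lam_val p l u \<noteq> 0 \<or> mu_val p m z \<noteq> 0)
            \<longrightarrow> (\<exists>k\<in>{0..p}. \<exists>\<alpha>::'a. \<alpha> \<noteq> 0 \<and>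
                  (\<forall>u. lam_val p l u = \<alpha> * lam_val p (lamk k) u) \<and>
                  (\<forall>z. mu_val p m z = \<alpha>^2 * mu_val p (muk k) z)))
         \<and> (\<forall>k\<in>{0..p}. short_hom p (lamk k :: nat \<Rightarrow> 'a) (muk k))"
proof (intro conjI impI ballI)
  fix k show "short_hom p (lamk k :: nat \<Rightarrow> 'a) (muk k)"
    by (simp add: short_hom_iff_on_basis short_hom_on_basis_lamk_muk)
next
  assume "short_hom p l m \<and> (\<exists>u z. lam_val p l u \<noteq> 0 \<or> mu_val p m z \<noteq> 0)"
  then have basis: "short_hom_on_basis p l m"
    and nontrivial: "\<exists>u z. lam_val p l u \<noteq> 0 \<or> mu_val p m z \<noteq> 0"
    by (auto simp: short_hom_iff_on_basis)
  have "\<exists>i\<in>{1..p}. l i \<noteq> 0"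
  proof (rule ccontr)
    assume "\<not> (\<exists>i\<in>{1..p}. l i \<noteq> 0)"
    then have "\<forall>i\<in>{1..p}. l i = 0" by blast
    moreover from this have "\<forall>i\<in>{0..p}. m i = 0"
      using short_hom_on_basis_zero[OF _ basis] p3 by simp
    ultimately show False
      using nontrivial by (simp add: lam_val_def mu_val_def)
  qed
  then obtain k \<alpha> where "k \<in> {0..p}" "\<alpha> \<noteq> 0"
    "\<forall>i\<in>{1..p}. l i = \<alpha> * lamk k i" "\<forall>i\<in>{0..p}. m i = \<alpha>^2 * muk k i"
    using short_hom_on_basis_classification[OF p3 basis] by blast
  then show "\<exists>k\<in>{0..p}. \<exists>\<alpha>::'a. \<alpha> \<noteq> 0 \<and>
      (\<forall>u. lam_val p l u = \<alpha> * lam_val p (lamk k) u) \<and>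
      (\<forall>z. mu_val p m z = \<alpha>^2 * mu_val p (muk k) z)"
    by (intro bexI[of _ k] exI[of _ \<alpha>]) (simp add: lam_val_scale mu_val_scale)
qed

end
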